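(* Let $n$ be odd and consider $n$ particles on $\mathbb{M}^2$ lying on one geodesic (the real axis), with masses $m_1>0$, $m_2=m_3=1$, $m_4=m_5>0$, $\dots$, $m_{n-1}=m_n>0$ and initial positions $z_1=0$, $z_{2k}=-z_{2k+1}$ real for $k=1,\dots,(n-1)/2$, with $0<z_2<z_4<\dots<z_{n-1}$. Then there do not exist relative equilibria if any of the following holds: (1) all $n$ particles are inside the geodesic circle $|z|=1$ (i.e. $z_{n-1}<1$); (2) all particles except bodies $1,2,3$ are outside the geodesic circle while bodies $2,3$ are inside (i.e. $z_2<1<z_4$), and $z_{n-1}<1/z_2$; (3) all particles except bodies $n-1$ and $n$ are inside the geodesic circle (i.e. $z_{n-3}<1<z_{n-1}$), and $z_{n-1}<1/z_{n-3}$.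
   Context: $\mathbb{M}^2$ is the complex plane with metric $ds^2=\frac{4\,dz\,d\bar z}{(1+|z|^2)^2}$; the distance satisfies $\cos d(z_k,z_j)=\frac{2(z_k\bar z_j+z_j\bar z_k)+(|z_k|^2-1)(|z_j|^2-1)}{(|z_k|^2+1)(|z_j|^2+1)}$. The curved $n$-body problem has kinetic energy $T=\frac12\sum_i m_i\frac{4|\dot z_i|^2}{(1+|z_i|^2)^2}$ and force function $U=\sum_{i<j}m_im_j\cot d(z_i,z_j)$. A relative equilibrium is a solution invariant under a one-parameter subgroup of isometries; it suffices to consider solutions $w(t)=e^{it}z$. Following earlier work, positions $z_1,\dots,z_n$ ($r_l=|z_l|$) form a relative equilibrium iff for each $i$: $\frac{(1-r_i^2)z_i}{4(1+r_i^2)^4}=-\sum_{j\ne i}\frac{m_j(r_j^2+1)^2(1+z_i\bar z_j)(z_j-z_i)}{T_{ij}^{3/2}}$, with $T_{ij}=(r_i^2+1)^2(r_j^2+1)^2-[2(z_i\bar z_j+z_j\bar z_i)+(r_i^2-1)(r_j^2-1)]^2$. Singular configurations are excluded. *)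

theory Defs
  imports Complex_Main
begin

definition Tij :: "complex \<Rightarrow> complex \<Rightarrow> real" where
  "Tij zi zj =
     ((cmod zi)^2 + 1)^2 * ((cmod zj)^2 + 1)^2
     - (Re (2 * (zi * cnj zj + zj * cnj zi)) + ((cmod zi)^2 - 1) * ((cmod zj)^2 - 1))^2"

text \<open>Singular configurations (T_ij = 0 for some i ~= j: collisions or antipodal
  bodies) are excluded.\<close>
definition nonsingular :: "nat \<Rightarrow> (nat \<Rightarrow> complex) \<Rightarrow> bool" where
  "nonsingular n z \<longleftrightarrow> (\<forall>i\<in>{1..n}. \<forall>j\<in>{1..n}. i \<noteq> j \<longrightarrow> Tij (z i) (z j) \<noteq> 0)"

definition rel_eq_eqns :: "nat \<Rightarrow> (nat \<Rightarrow> real) \<Rightarrow> (nat \<Rightarrow> complex) \<Rightarrow> bool" where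
  "rel_eq_eqns n m z \<longleftrightarrow>
     (\<forall>i\<in>{1..n}.
        (1 - complex_of_real ((cmod (z i))^2)) * z i
          / (4 * (1 + complex_of_real ((cmod (z i))^2))^4)
        = - (\<Sum>j\<in>{1..n} - {i}.
               complex_of_real (m j * ((cmod (z j))^2 + 1)^2)
                 * (1 + z i * cnj (z j)) * (z j - z i)
               / complex_of_real ((Tij (z i) (z j)) powr (3/2))))"

definition relative_equilibrium :: "nat \<Rightarrow> (nat \<Rightarrow> real) \<Rightarrow> (nat \<Rightarrow> complex) \<Rightarrow> bool" where
  "relative_equilibrium n m z \<longleftrightarrow> nonsingular n z \<and> rel_eq_eqns n m z"

end

theory Submission
  imports Defs
begin

text \<open>On the real axis the equation of body \<open>i\<close> becomes the real identity
  \<open>rel_eq_lhs (x i) = (\<Sum>j. m j * interaction (x i) (x j))\<close>, whose left-hand side is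
  always below \<open>1/16\<close>. Apply it to a suitable body \<open>p\<close> on the positive axis (the outermost
  one in case (1), body 2 in case (2), body \<open>n - 3\<close> in case (3)) and group the others into
  the centre and the symmetric pairs. The centre contributes positively, and so does every
  pair: a pair inside the unit circle because both of its terms are positive, a pair \<open>\<plusminus>y\<close>
  outside it because the inversion condition \<open>p y < 1\<close> makes the positive term of \<open>-y\<close>
  outweigh the negative term of \<open>y\<close>. But one of these contributions alone (the partner of
  \<open>p\<close>, or the innermost pair) already exceeds \<open>1/16\<close>, so the equation cannot hold.\<close>

definition rel_eq_lhs :: "real \<Rightarrow> real" where
  "rel_eq_lhs p = (1 - p^2) * p / (4 * (1 + p^2)^4)"

definition gap :: "real \<Rightarrow> real \<Rightarrow> real" where
  "gap p y = (1 + p * y) * (p - y)"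

definition interaction :: "real \<Rightarrow> real \<Rightarrow> real" where
  "interaction p y = (1 + y^2)^2 * gap p y / (8 * \<bar>gap p y\<bar>^3)"

lemma Tij_of_real: "Tij (of_real p) (of_real y) = (2 * gap p y)^2"
  unfolding Tij_def gap_def by (simp add: power2_eq_square algebra_simps)

lemma power2_powr_three_halves: "((u::real)^2) powr (3/2) = \<bar>u\<bar>^3"
proof (cases "u = 0")
  case False
  have "(u^2) powr (3/2) = (\<bar>u\<bar> powr 2) powr (3/2)"
    using False by (simp add: powr_realpow)
  also have "\<dots> = \<bar>u\<bar> powr (real 3)"
    unfolding powr_powr by simp
  also have "\<dots> = \<bar>u\<bar>^3"
    using False by (simp add: powr_realpow)
  finally show ?thesis .
qed simp

lemma interaction_term_of_real:
  "complex_of_real (mj * ((cmod (complex_of_real y))^2 + 1)^2)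
     * (1 + complex_of_real p * cnj (complex_of_real y)) * (complex_of_real y - complex_of_real p)
     / complex_of_real ((Tij (complex_of_real p) (complex_of_real y)) powr (3/2))
   = - complex_of_real (mj * interaction p y)"
proof -
  have "(1 + complex_of_real p * cnj (complex_of_real y)) * (complex_of_real y - complex_of_real p)
      = complex_of_real (- gap p y)"
    by (simp add: gap_def algebra_simps)
  moreover have "(cmod (complex_of_real y))^2 + 1 = 1 + y^2" by simp
  moreover have "(Tij (complex_of_real p) (complex_of_real y)) powr (3/2) = 8 * \<bar>gap p y\<bar>^3"
    by (simp only: Tij_of_real power2_powr_three_halves) (simp add: abs_mult power_mult_distrib)
  ultimately have "complex_of_real (mj * ((cmod (complex_of_real y))^2 + 1)^2)
     * (1 + complex_of_real p * cnj (complex_of_real y)) * (complex_of_real y - complex_of_real p)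
     / complex_of_real ((Tij (complex_of_real p) (complex_of_real y)) powr (3/2))
    = complex_of_real (mj * (1 + y^2)^2 * (- gap p y) / (8 * \<bar>gap p y\<bar>^3))"
    by (simp only: mult.assoc of_real_mult of_real_divide)
  also have "mj * (1 + y^2)^2 * (- gap p y) / (8 * \<bar>gap p y\<bar>^3) = - (mj * interaction p y)"
    by (simp add: interaction_def)
  finally show ?thesis by simp
qed

lemma rel_eq_eqns_of_real:
  assumes "rel_eq_eqns n m z" "i \<in> {1..n}" "\<forall>j\<in>{1..n}. z j = complex_of_real (x j)"
  shows "rel_eq_lhs (x i) = (\<Sum>j\<in>{1..n} - {i}. m j * interaction (x i) (x j))"
proof -
  have zi: "z i = complex_of_real (x i)" using assms(2,3) by blast
  have "complex_of_real (rel_eq_lhs (x i))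
      = (1 - complex_of_real ((cmod (z i))^2)) * z i / (4 * (1 + complex_of_real ((cmod (z i))^2))^4)"
    by (simp add: zi rel_eq_lhs_def)
  also have "\<dots> = - (\<Sum>j\<in>{1..n} - {i}.
               complex_of_real (m j * ((cmod (z j))^2 + 1)^2)
                 * (1 + z i * cnj (z j)) * (z j - z i)
               / complex_of_real ((Tij (z i) (z j)) powr (3/2)))"
    using assms(1,2) unfolding rel_eq_eqns_def by blast
  also have "\<dots> = - (\<Sum>j\<in>{1..n} - {i}. - complex_of_real (m j * interaction (x i) (x j)))"
  proof (intro arg_cong[where f = uminus] sum.cong refl)
    fix j assume "j \<in> {1..n} - {i}"
    then have zj: "z j = complex_of_real (x j)" using assms(3) by blast
    show "complex_of_real (m j * ((cmod (z j))^2 + 1)^2) * (1 + z i * cnj (z j)) * (z j - z i)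
          / complex_of_real ((Tij (z i) (z j)) powr (3/2))
        = - complex_of_real (m j * interaction (x i) (x j))"
      unfolding zi zj by (rule interaction_term_of_real)
  qed
  also have "\<dots> = complex_of_real (\<Sum>j\<in>{1..n} - {i}. m j * interaction (x i) (x j))"
    by (simp add: sum_negf)
  finally show ?thesis by (simp only: of_real_eq_iff)
qed

lemma interaction_gap_pos: "gap p y > 0 \<Longrightarrow> interaction p y = (1 + y^2)^2 / (8 * (gap p y)^2)"
  unfolding interaction_def by (simp add: power3_eq_cube power2_eq_square)

lemma interaction_gap_neg: "gap p y < 0 \<Longrightarrow> interaction p y = - ((1 + y^2)^2 / (8 * (gap p y)^2))"
  unfolding interaction_def by (simp add: power3_eq_cube power2_eq_square)

lemma interaction_pos: assumes "gap p y > 0" shows "interaction p y > 0"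
proof -
  have "0 < 1 + y^2" by (simp add: add_pos_nonneg)
  then show ?thesis unfolding interaction_gap_pos[OF assms] using assms by simp
qed

lemma interaction_antipodal_pos: assumes "0 < p" "p < 1" shows "0 < interaction p (-p)"
proof -
  have "p * p < 1" using mult_strict_mono[of p 1 p 1] assms by simp
  then show ?thesis using assms by (intro interaction_pos) (simp add: gap_def)
qed

lemma interaction_gt_1_div_32: assumes "0 < gap p y" "gap p y < 2" shows "1/32 < interaction p y"
proof -
  have "(gap p y)^2 < 2^2" using assms by (intro power_strict_mono) auto
  then have "1/32 < 1 / (8 * (gap p y)^2)" using assms by (simp add: field_simps)
  also have "\<dots> \<le> interaction p y"
    unfolding interaction_gap_pos[OF assms(1)] using assms
    by (intro divide_right_mono) (simp_all add: one_le_power)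
  finally show ?thesis .
qed

lemma rel_eq_lhs_lt_1_div_16: assumes "0 < p" shows "rel_eq_lhs p < 1/16"
proof -
  have "(1 + p^2)^4 \<ge> 1 + 4 * p^2" using Bernoulli_inequality[of "p^2" 4] zero_le_power2[of p] by simp
  moreover have "4 * ((1 - p^2) * p) = 1 + 4*p^2 - (1 - 2*p)^2 - 4*p^3"
    by (simp add: power2_eq_square power3_eq_cube algebra_simps)
  moreover have "p^3 > 0" using assms by simp
  ultimately have "4 * ((1 - p^2) * p) < (1 + p^2)^4"
    using zero_le_power2[of "1 - 2 * p"] by linarith
  then have "(1 - p^2) * p < 1/16 * (4 * (1 + p^2)^4)" by simp
  moreover have "0 < 1 + p^2" by (simp add: add_pos_nonneg)
  then have "0 < 4 * (1 + p^2)^4" by simp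
  ultimately show ?thesis unfolding rel_eq_lhs_def by (simp only: pos_divide_less_eq)
qed

lemma rel_eq_lhs_lt_antipodal: assumes "0 < p" "p < 1" shows "rel_eq_lhs p < interaction p (-p)"
proof -
  have g: "gap p (-p) = 2 * p * (1 - p^2)" by (simp add: gap_def power2_eq_square algebra_simps)
  have "p^2 < 1" using assms by (simp add: power_less_one_iff)
  then have g0: "0 < gap p (-p)" "gap p (-p) \<le> 2 * p" using assms by (simp_all add: g)
  have "1 + 2 * p^2 \<le> (1 + p^2)^2" by (simp add: power2_sum)
  then have "(gap p (-p))^2 * 2 < 4 * (1 + p^2)^2"
    using g0 power_mono[OF g0(2), of 2] by (simp add: power_mult_distrib)
  then have "1/16 < interaction p (-p)"
    using g0 by (simp add: interaction_gap_pos field_simps)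
  then show ?thesis using rel_eq_lhs_lt_1_div_16[OF assms(1)] by linarith
qed

lemma rel_eq_lhs_lt_inner_pair:
  assumes "0 < a" "a < p" "p < 1"
  shows "rel_eq_lhs p < interaction p a + interaction p (-a)"
proof -
  have pa: "p * a < 1" using mult_strict_mono[of p 1 a 1] assms by simp
  have "0 < gap p a" "0 < gap p (-a)"
    using assms pa unfolding gap_def by (simp_all add: add_pos_pos)
  moreover have "(1 + p * a) * (p - a) < 2 * 1"
    using assms pa by (intro mult_strict_mono) auto
  moreover have "(1 - p * a) * (p + a) < 1 * 2"
    using assms pa by (intro mult_le_less_imp_less) auto
  ultimately have "0 < gap p a" "gap p a < 2" "0 < gap p (-a)" "gap p (-a) < 2"
    unfolding gap_def by simp_all
  then have "1/32 < interaction p a" "1/32 < interaction p (-a)"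
    by (blast intro: interaction_gt_1_div_32)+
  then show ?thesis using rel_eq_lhs_lt_1_div_16[of p] assms by linarith
qed

lemma inner_pair_pos:
  assumes "0 < a" "a < p" "p < 1"
  shows "0 < interaction p a + interaction p (-a)"
proof -
  have "p * a < 1" using mult_strict_mono[of p 1 a 1] assms by simp
  then have "0 < gap p a" "0 < gap p (-a)" using assms unfolding gap_def by (simp_all add: add_pos_pos)
  then show ?thesis by (simp add: interaction_pos add_pos_pos)
qed

lemma outer_pair_pos:
  assumes "0 < p" "1 < c" "p * c < 1"
  shows "0 < interaction p c + interaction p (-c)"
proof -
  have "p * 1 < p * c" using assms by (intro mult_strict_left_mono)
  then have "p < c" using assms by linarith
  moreover have "0 < 1 + p * c" using assms by (simp add: add_pos_pos)
  ultimately have neg: "gap p c < 0" unfolding gap_def by (simp add: mult_pos_neg)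
  have pos: "0 < gap p (-c)" using assms unfolding gap_def by simp
  have "gap p (-c) + gap p c = - 2 * p * (c * c - 1)" by (simp add: gap_def algebra_simps)
  moreover have "1 < c * c" using mult_strict_mono[of 1 c 1 c] assms by simp
  then have "0 < 2 * p * (c * c - 1)" using assms by simp
  ultimately have "gap p (-c) < - gap p c" by linarith
  then have "(gap p (-c))^2 < (- gap p c)^2" using pos by (intro power_strict_mono) auto
  then have "(gap p (-c))^2 < (gap p c)^2" by simp
  then have "(1 + c^2)^2 / (8 * (gap p c)^2) < (1 + c^2)^2 / (8 * (gap p (-c))^2)"
    using pos neg add_pos_nonneg[of 1 "c^2"] by (intro divide_strict_left_mono) auto
  then show ?thesis using interaction_gap_neg[OF neg] interaction_gap_pos[OF pos] by simp
qed

lemma sum_odd_interval_pairs: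
  fixes g :: "nat \<Rightarrow> 'a::comm_monoid_add"
  assumes "i \<noteq> 1"
  shows "(\<Sum>j\<in>{1..2*N+1} - {i}. g j) = g 1 + (\<Sum>k\<in>{1..N}. \<Sum>j\<in>{2*k, 2*k+1} - {i}. g j)"
proof (induction N)
  case 0
  then show ?case using assms by simp
next
  case (Suc N)
  have split: "{1..2 * Suc N + 1} - {i} = ({1..2*N+1} - {i}) \<union> ({2 * Suc N, 2 * Suc N + 1} - {i})"
    by auto
  have "(\<Sum>j\<in>{1..2 * Suc N + 1} - {i}. g j)
      = (\<Sum>j\<in>{1..2*N+1} - {i}. g j) + (\<Sum>j\<in>{2 * Suc N, 2 * Suc N + 1} - {i}. g j)"
    unfolding split by (rule sum.union_disjoint) auto
  then show ?case using Suc by (simp add: add.assoc)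
qed

locale symmetric_collinear_equilibrium =
  fixes N :: nat and m x :: "nat \<Rightarrow> real"
  assumes N_pos: "1 \<le> N"
    and m_center_pos: "0 < m 1"
    and m_inner: "m 2 = 1"
    and m_pair: "\<And>k. 1 \<le> k \<Longrightarrow> k \<le> N \<Longrightarrow> 0 < m (2*k) \<and> m (2*k+1) = m (2*k)"
    and x_center: "x 1 = 0"
    and x_pair: "\<And>k. 1 \<le> k \<Longrightarrow> k \<le> N \<Longrightarrow> x (2*k+1) = - x (2*k)"
    and x_inner_pos: "0 < x 2"
    and x_step: "\<And>k. 1 \<le> k \<Longrightarrow> k < N \<Longrightarrow> x (2*k) < x (2*k+2)"
    and equations: "\<And>i. i \<in> {1..2*N+1} \<Longrightarrow>
      rel_eq_lhs (x i) = (\<Sum>j\<in>{1..2*N+1} - {i}. m j * interaction (x i) (x j))"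
begin

lemma x_less: "1 \<le> k \<Longrightarrow> k < l \<Longrightarrow> l \<le> N \<Longrightarrow> x (2*k) < x (2*l)"
proof (induction l)
  case (Suc l)
  then have "x (2*l) < x (2*Suc l)" using x_step[of l] by simp
  then show ?case using Suc by (cases "k = l") auto
qed simp

lemma x_le: "1 \<le> k \<Longrightarrow> k \<le> l \<Longrightarrow> l \<le> N \<Longrightarrow> x (2*k) \<le> x (2*l)"
  using x_less[of k l] by (cases "k = l") auto

lemma x_pos: "1 \<le> k \<Longrightarrow> k \<le> N \<Longrightarrow> 0 < x (2*k)"
  using x_le[of 1 k] x_inner_pos by simp

definition pair_force :: "nat \<Rightarrow> nat \<Rightarrow> real" where
  "pair_force i k = (\<Sum>j\<in>{2*k, 2*k+1} - {i}. m j * interaction (x i) (x j))"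

lemma pair_force_partner:
  "1 \<le> k \<Longrightarrow> k \<le> N \<Longrightarrow> pair_force (2*k) k = m (2*k) * interaction (x (2*k)) (- x (2*k))"
  using m_pair[of k] x_pair[of k] by (simp add: pair_force_def)

lemma pair_force_other:
  assumes "1 \<le> k" "k \<le> N" "k \<noteq> i"
  shows "pair_force (2*i) k
    = m (2*k) * (interaction (x (2*i)) (x (2*k)) + interaction (x (2*i)) (- x (2*k)))"
proof -
  have "{2*k, 2*k+1} - {2*i} = {2*k, 2*k+1}" using assms(3) by auto
  then show ?thesis using assms m_pair[of k] x_pair[of k]
    by (simp add: pair_force_def algebra_simps)
qed

lemma no_dominant_pair_force:
  assumes i: "1 \<le> i" "i \<le> N"
    and nonneg: "\<And>k. 1 \<le> k \<Longrightarrow> k \<le> N \<Longrightarrow> 0 \<le> pair_force (2*i) k"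
    and k0: "1 \<le> k0" "k0 \<le> N" and dominant: "rel_eq_lhs (x (2*i)) < pair_force (2*i) k0"
  shows False
proof -
  have "rel_eq_lhs (x (2*i)) = m 1 * interaction (x (2*i)) 0 + (\<Sum>k\<in>{1..N}. pair_force (2*i) k)"
    using equations[of "2*i"] i x_center
      sum_odd_interval_pairs[where i = "2*i" and g = "\<lambda>j. m j * interaction (x (2*i)) (x j)"]
    by (simp add: pair_force_def)
  moreover have "0 < m 1 * interaction (x (2*i)) 0"
    using m_center_pos x_pos[OF i] by (simp add: interaction_pos gap_def)
  moreover have "pair_force (2*i) k0 \<le> (\<Sum>k\<in>{1..N}. pair_force (2*i) k)"
    using k0 nonneg by (intro member_le_sum) auto
  ultimately show False using dominant by linarith
qed

lemma outermost_outside_unit_circle: "1 \<le> x (2*N)"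
proof (rule ccontr)
  assume "\<not> 1 \<le> x (2*N)"
  then have b: "0 < x (2*N)" "x (2*N) < 1" using x_pos[of N] N_pos by auto
  show False
  proof (rule no_dominant_pair_force[of N 1])
    fix k assume k: "1 \<le> k" "k \<le> N"
    show "0 \<le> pair_force (2*N) k"
    proof (cases "k = N")
      case True
      then show ?thesis
        using pair_force_partner[OF k] m_pair[OF k] interaction_antipodal_pos[OF b] by simp
    next
      case False
      then have "0 < x (2*k)" "x (2*k) < x (2*N)" using k x_pos x_less by auto
      then have "0 < interaction (x (2*N)) (x (2*k)) + interaction (x (2*N)) (- x (2*k))"
        using inner_pair_pos b by blast
      then show ?thesis using pair_force_other[OF k False] m_pair[OF k] by simp
    qed
  next
    show "rel_eq_lhs (x (2*N)) < pair_force (2*N) 1"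
    proof (cases "N = 1")
      case True
      then show ?thesis
        using pair_force_partner[of 1] m_inner rel_eq_lhs_lt_antipodal[OF b] by simp
    next
      case False
      then have "0 < x 2" "x 2 < x (2*N)" using x_inner_pos x_less[of 1 N] N_pos by auto
      then show ?thesis
        using pair_force_other[of 1 N] False N_pos m_inner rel_eq_lhs_lt_inner_pair b by simp
    qed
  qed (use N_pos in auto)
qed

lemma outermost_beyond_inverse_of_inner:
  assumes "x 2 < 1" "1 < x 4"
  shows "1 \<le> x 2 * x (2*N)"
proof (rule ccontr)
  assume "\<not> 1 \<le> x 2 * x (2*N)"
  then have outer: "x 2 * x (2*N) < 1" by simp
  have a: "0 < x 2" "x 2 < 1" using x_inner_pos assms(1) by auto
  show False
  proof (rule no_dominant_pair_force[of 1 1])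
    fix k assume k: "1 \<le> k" "k \<le> N"
    show "0 \<le> pair_force (2*1) k"
    proof (cases "k = 1")
      case True
      then show ?thesis using pair_force_partner[of 1] N_pos m_inner interaction_antipodal_pos[OF a]
        by simp
    next
      case False
      have "x 2 * x (2*k) \<le> x 2 * x (2*N)"
        using x_le[of k N] k a by (intro mult_left_mono) auto
      then have "x 2 * x (2*k) < 1" using outer by linarith
      moreover have "1 < x (2*k)" using x_le[of 2 k] k False assms(2) by simp
      ultimately have "0 < interaction (x 2) (x (2*k)) + interaction (x 2) (- x (2*k))"
        using outer_pair_pos a by blast
      then show ?thesis using pair_force_other[OF k False] m_pair[OF k] by simp
    qed
  next
    show "rel_eq_lhs (x (2*1)) < pair_force (2*1) 1"
      using pair_force_partner[of 1] N_pos m_inner rel_eq_lhs_lt_antipodal[OF a] by simp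
  qed (use N_pos in auto)
qed

lemma outermost_beyond_inverse_of_next:
  assumes "2 \<le> N" "x (2*(N-1)) < 1" "1 < x (2*N)"
  shows "1 \<le> x (2*(N-1)) * x (2*N)"
proof (rule ccontr)
  assume "\<not> 1 \<le> x (2*(N-1)) * x (2*N)"
  then have outer: "x (2*(N-1)) * x (2*N) < 1" by simp
  have c: "0 < x (2*(N-1))" "x (2*(N-1)) < 1" using x_pos[of "N-1"] assms by auto
  show False
  proof (rule no_dominant_pair_force[of "N-1" 1])
    fix k assume k: "1 \<le> k" "k \<le> N"
    consider "k = N-1" | "k = N" | "k < N-1" using k by linarith
    then show "0 \<le> pair_force (2*(N-1)) k"
    proof cases
      case 1
      then show ?thesis
        using pair_force_partner[of "N-1"] m_pair[OF k] interaction_antipodal_pos[OF c] k by simp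
    next
      case 2
      then have "0 < interaction (x (2*(N-1))) (x (2*k)) + interaction (x (2*(N-1))) (- x (2*k))"
        using outer_pair_pos c assms(3) outer by simp
      then show ?thesis using pair_force_other[OF k] 2 assms(1) m_pair[OF k] by simp
    next
      case 3
      then have "0 < x (2*k)" "x (2*k) < x (2*(N-1))" using k x_pos x_less[of k "N-1"] by auto
      then have "0 < interaction (x (2*(N-1))) (x (2*k)) + interaction (x (2*(N-1))) (- x (2*k))"
        using inner_pair_pos c by blast
      then show ?thesis using pair_force_other[OF k] 3 m_pair[OF k] by simp
    qed
  next
    show "rel_eq_lhs (x (2*(N-1))) < pair_force (2*(N-1)) 1"
    proof (cases "N = 2")
      case True
      then show ?thesis
        using pair_force_partner[of 1] m_inner rel_eq_lhs_lt_antipodal[OF c] by simp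
    next
      case False
      then have "0 < x 2" "x 2 < x (2*(N-1))" using x_inner_pos x_less[of 1 "N-1"] assms(1) by auto
      then show ?thesis using pair_force_other[of 1 "N-1"] False assms(1) m_inner
          rel_eq_lhs_lt_inner_pair c by simp
    qed
  qed (use assms(1) in auto)
qed

end

theorem proposition2:
  fixes n :: nat and m :: "nat \<Rightarrow> real" and z :: "nat \<Rightarrow> complex"
  assumes n_odd: "odd n" and n_ge: "n \<ge> 3"
    and m1: "m 1 > 0"
    and m23: "m 2 = 1" "m 3 = 1"
    and mpairs: "\<forall>k. 2 \<le> k \<and> 2 * k + 1 \<le> n \<longrightarrow> m (2 * k) > 0 \<and> m (2 * k + 1) = m (2 * k)"
    and z1: "z 1 = 0"
    and zreal: "\<forall>j\<in>{1..n}. Im (z j) = 0"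
    and zsym: "\<forall>k. 1 \<le> k \<and> 2 * k + 1 \<le> n \<longrightarrow> z (2 * k + 1) = - z (2 * k)"
    and zpos: "0 < Re (z 2)"
    and zord: "\<forall>k. 1 \<le> k \<and> 2 * k + 3 \<le> n \<longrightarrow> Re (z (2 * k)) < Re (z (2 * k + 2))"
    and cases:
      "Re (z (n - 1)) < 1
       \<or> (n \<ge> 5 \<and> Re (z 2) < 1 \<and> 1 < Re (z 4) \<and> Re (z (n - 1)) < 1 / Re (z 2))
       \<or> (n \<ge> 5 \<and> Re (z (n - 3)) < 1 \<and> 1 < Re (z (n - 1)) \<and> Re (z (n - 1)) < 1 / Re (z (n - 3)))"
  shows "\<not> relative_equilibrium n m z"
proof
  assume "relative_equilibrium n m z"
  then have eqns: "rel_eq_eqns n m z" by (simp add: relative_equilibrium_def)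
  obtain N where n: "n = 2*N+1" using n_odd oddE by blast
  define x where "x j = Re (z j)" for j
  have z_x: "\<forall>j\<in>{1..n}. z j = complex_of_real (x j)"
    using zreal by (auto simp: x_def complex_eq_iff)
  interpret symmetric_collinear_equilibrium N m x
  proof
    fix k assume k: "1 \<le> k" "k \<le> N"
    show "0 < m (2*k) \<and> m (2*k+1) = m (2*k)" using k m23 mpairs n by (cases "k = 1") auto
    show "x (2*k+1) = - x (2*k)" using k zsym n by (simp add: x_def)
  next
    fix i assume "i \<in> {1..2*N+1}"
    then show "rel_eq_lhs (x i) = (\<Sum>j\<in>{1..2*N+1} - {i}. m j * interaction (x i) (x j))"
      using rel_eq_eqns_of_real[OF eqns _ z_x] n by simp
  qed (use n_ge n m1 m23 z1 zpos zord in \<open>auto simp: x_def\<close>)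
  have "n - 1 = 2*N" "n - 3 = 2*(N-1)" using n by simp_all
  then show False
    using cases outermost_outside_unit_circle outermost_beyond_inverse_of_inner
      outermost_beyond_inverse_of_next x_inner_pos x_pos[of "N-1"] n
    by (auto simp: x_def pos_less_divide_eq mult.commute)
qed

end
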